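(* Let $n$ be a natural number and $s$ a negative integer with $n+s>0$, and put $m=\frac{(-s)(n-1)}{n+s}$. Suppose there exists a divisible design graph $\Delta$ with parameters $(V,K,\lambda_1,\lambda_2;m,n)$, where $V=\frac{n(-s)(n-1)}{n+s}$, $K=(-s)(n-1)$, $\lambda_1=(-s)(n+s-1)$, $\lambda_2=\frac{(-s)(n-1)(n+s)}{n}$, with canonical classes $P_1,\dots,P_m$. Let $\mathcal{D}=(\mathcal{P},\mathcal{B})$ be a symmetric $2$-design with parameters $(m,-s,\frac{(-s)(n+s)}{n})$, with $\mathcal{P}$ disjoint from the vertex set of $\Delta$, and let $\phi$ be any bijection from $\{P_1,\dots,P_m\}$ to $\mathcal{B}$. Define the graph $\Gamma$ with vertex set $V(\Delta)\cup\mathcal{P}$ in which: two vertices of $\Delta$ are adjacent iff they are adjacent in $\Delta$; no two points of $\mathcal{P}$ are adjacent; a vertex $x\in P_i$ is adjacent to $y\in\mathcal{P}$ iff $y\in\phi(P_i)$. Then $\Gamma$ is a strongly regular graph with parameters $v=m(n+1)$, $k=(-s)n$, $\lambda=\mu=(-s)(n+s)$.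
   Context: A $K$-regular graph on $V$ vertices, neither complete nor edgeless, is a divisible design graph with parameters $(V,K,\lambda_1,\lambda_2;m,n)$ if its vertex set can be partitioned into $m$ classes (canonical classes) of size $n$ such that any two distinct vertices in the same class have exactly $\lambda_1$ common neighbours and any two vertices in different classes have exactly $\lambda_2$ common neighbours. A symmetric $2$-design with parameters $(m,\kappa,\ell)$ is a pair $(\mathcal{P},\mathcal{B})$ where $\mathcal{P}$ is a set of $m$ points and $\mathcal{B}$ a set of $m$ subsets (blocks) of $\mathcal{P}$, each of size $\kappa$, such that every two distinct points lie in exactly $\ell$ common blocks (equivalently, any two distinct blocks meet in exactly $\ell$ points). A strongly regular graph with parameters $(v,k,\lambda,\mu)$ is a $k$-regular graph on $v$ vertices in which adjacent vertices have $\lambda$ and distinct non-adjacent vertices have $\mu$ common neighbours. *)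

theory Defs
  imports Main
begin

definition simple_graph :: "'a set \<Rightarrow> ('a \<Rightarrow> 'a \<Rightarrow> bool) \<Rightarrow> bool" where
  "simple_graph V E \<longleftrightarrow> finite V \<and> (\<forall>x y. E x y \<longrightarrow> x \<in> V \<and> y \<in> V)
     \<and> (\<forall>x y. E x y \<longrightarrow> E y x) \<and> (\<forall>x. \<not> E x x)"

definition common_nbrs :: "'a set \<Rightarrow> ('a \<Rightarrow> 'a \<Rightarrow> bool) \<Rightarrow> 'a \<Rightarrow> 'a \<Rightarrow> nat" where
  "common_nbrs V E x y = card {z \<in> V. E x z \<and> E y z}"

definition regular_graph :: "'a set \<Rightarrow> ('a \<Rightarrow> 'a \<Rightarrow> bool) \<Rightarrow> nat \<Rightarrow> bool" where
  "regular_graph V E k \<longleftrightarrow> simple_graph V E \<and> (\<forall>x\<in>V. card {y \<in> V. E x y} = k)"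

definition complete_graph :: "'a set \<Rightarrow> ('a \<Rightarrow> 'a \<Rightarrow> bool) \<Rightarrow> bool" where
  "complete_graph V E \<longleftrightarrow> (\<forall>x\<in>V. \<forall>y\<in>V. x \<noteq> y \<longrightarrow> E x y)"

definition edgeless_graph :: "'a set \<Rightarrow> ('a \<Rightarrow> 'a \<Rightarrow> bool) \<Rightarrow> bool" where
  "edgeless_graph V E \<longleftrightarrow> (\<forall>x\<in>V. \<forall>y\<in>V. \<not> E x y)"

definition dd_graph ::
  "'a set \<Rightarrow> ('a \<Rightarrow> 'a \<Rightarrow> bool) \<Rightarrow> nat \<Rightarrow> nat \<Rightarrow> nat \<Rightarrow> nat \<Rightarrow> nat \<Rightarrow> nat \<Rightarrow> 'a set set \<Rightarrow> bool" where
  "dd_graph V E v k l1 l2 m n classes \<longleftrightarrow>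
     regular_graph V E k \<and> card V = v \<and>
     \<not> complete_graph V E \<and> \<not> edgeless_graph V E \<and>
     (\<Union>classes = V) \<and> (\<forall>C\<in>classes. \<forall>D\<in>classes. C \<noteq> D \<longrightarrow> C \<inter> D = {}) \<and>
     card classes = m \<and> (\<forall>C\<in>classes. card C = n) \<and>
     (\<forall>C\<in>classes. \<forall>x\<in>C. \<forall>y\<in>C. x \<noteq> y \<longrightarrow> common_nbrs V E x y = l1) \<and>
     (\<forall>C\<in>classes. \<forall>D\<in>classes. C \<noteq> D \<longrightarrow> (\<forall>x\<in>C. \<forall>y\<in>D. common_nbrs V E x y = l2))"

definition symmetric_design :: "'a set \<Rightarrow> 'a set set \<Rightarrow> nat \<Rightarrow> nat \<Rightarrow> nat \<Rightarrow> bool" where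
  "symmetric_design P B m \<kappa> l \<longleftrightarrow>
     finite P \<and> card P = m \<and> card B = m \<and>
     (\<forall>b\<in>B. b \<subseteq> P \<and> card b = \<kappa>) \<and>
     (\<forall>x\<in>P. \<forall>y\<in>P. x \<noteq> y \<longrightarrow> card {b \<in> B. x \<in> b \<and> y \<in> b} = l)"

definition strongly_regular :: "'a set \<Rightarrow> ('a \<Rightarrow> 'a \<Rightarrow> bool) \<Rightarrow> nat \<Rightarrow> nat \<Rightarrow> nat \<Rightarrow> nat \<Rightarrow> bool" where
  "strongly_regular V E v k lam mu \<longleftrightarrow>
     regular_graph V E k \<and> card V = v \<and>
     (\<forall>x\<in>V. \<forall>y\<in>V. E x y \<longrightarrow> common_nbrs V E x y = lam) \<and>
     (\<forall>x\<in>V. \<forall>y\<in>V. x \<noteq> y \<and> \<not> E x y \<longrightarrow> common_nbrs V E x y = mu)"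

definition gamma_adj ::
  "'a set \<Rightarrow> ('a \<Rightarrow> 'a \<Rightarrow> bool) \<Rightarrow> 'a set set \<Rightarrow> 'a set \<Rightarrow> ('a set \<Rightarrow> 'a set) \<Rightarrow> 'a \<Rightarrow> 'a \<Rightarrow> bool" where
  "gamma_adj V E classes P \<phi> x y \<longleftrightarrow>
     (x \<in> V \<and> y \<in> V \<and> E x y) \<or>
     (\<exists>C\<in>classes. x \<in> C \<and> y \<in> P \<and> y \<in> \<phi> C) \<or>
     (\<exists>C\<in>classes. y \<in> C \<and> x \<in> P \<and> x \<in> \<phi> C)"

end

theory Submission
  imports Defs
begin

text \<open>Write t = -s. Counting pairs of neighbours in \<Delta> shows that the numbers of neighbours
  of a vertex in the canonical classes have mean n - t, and the parameter relations force their
  variance to vanish: every vertex of \<Delta> has exactly n - t neighbours in every class. The same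
  variance argument shows that the symmetric design has replication number t and that any two of
  its blocks meet in l points. Hence \<Gamma> is tn-regular, and two distinct vertices of \<Gamma> have
  l1 + t, l2 + l, t(n - t) or n l common neighbours according as they are two vertices of \<Delta>
  in the same class, two vertices in different classes, a vertex and a point, or two points;
  all four numbers equal t(n - t).\<close>

section \<open>Double counting and vanishing variance\<close>

lemma sum_card_Collect_swap:
  assumes "finite A" "finite B"
  shows "(\<Sum>a\<in>A. card {b\<in>B. R a b}) = (\<Sum>b\<in>B. card {a\<in>A. R a b})"
  by (rule sum_multicount_gen) (use assms in auto)

lemma card_Collect_power2:
  "card {b\<in>B. R b} ^ 2 = card {pq\<in>B \<times> B. R (fst pq) \<and> R (snd pq)}"
proof -
  have "{pq\<in>B \<times> B. R (fst pq) \<and> R (snd pq)} = {b\<in>B. R b} \<times> {b\<in>B. R b}" by auto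
  then show ?thesis by (simp add: card_cartesian_product power2_eq_square)
qed

lemma sum_card_Collect_power2:
  assumes "finite A" "finite B"
  shows "(\<Sum>a\<in>A. card {b\<in>B. R a b} ^ 2) = (\<Sum>p\<in>B. \<Sum>q\<in>B. card {a\<in>A. R a p \<and> R a q})"
proof -
  have "(\<Sum>a\<in>A. card {b\<in>B. R a b} ^ 2)
      = (\<Sum>pq\<in>B \<times> B. card {a\<in>A. R a (fst pq) \<and> R a (snd pq)})"
    unfolding card_Collect_power2 using assms by (intro sum_card_Collect_swap) auto
  then show ?thesis by (simp add: sum.cartesian_product case_prod_beta)
qed

lemma sum_sum_if_eq:
  fixes a d :: "'a::comm_ring_1"
  assumes "finite A"
  shows "(\<Sum>p\<in>A. \<Sum>q\<in>A. if p = q then a else d) = of_nat (card A) * (a + (of_nat (card A) - 1) * d)"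
proof -
  have "(\<Sum>q\<in>A. if p = q then a else d) = (\<Sum>q\<in>A. d + (if p = q then a - d else 0))" for p
    by (rule sum.cong) auto
  then show ?thesis using assms by (simp add: sum.distrib algebra_simps)
qed

lemma eq_if_sum_power2_deviation_eq_0:
  fixes f :: "'b \<Rightarrow> 'a::linordered_idom"
  assumes "finite I" and "i \<in> I"
    and "(\<Sum>i\<in>I. f i ^ 2) - 2 * c * (\<Sum>i\<in>I. f i) + of_nat (card I) * c ^ 2 = 0"
  shows "f i = c"
proof -
  have "(\<Sum>i\<in>I. (f i - c) ^ 2) = (\<Sum>i\<in>I. f i ^ 2 - 2 * c * f i + c ^ 2)"
    by (rule sum.cong) (simp_all add: power2_diff)
  also have "\<dots> = 0"
    using assms(3) by (simp add: sum.distrib sum_subtractf sum_distrib_left)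
  finally have "(f i - c) ^ 2 = 0"
    using assms(1,2) by (simp add: sum_nonneg_eq_0_iff)
  then show ?thesis by simp
qed

section \<open>Symmetric designs\<close>

lemma symmetric_design_finite_blocks:
  "symmetric_design P B m k l \<Longrightarrow> finite B"
  unfolding symmetric_design_def by (auto intro: finite_subset[of B "Pow P"])

lemma symmetric_design_replication_mult:
  assumes des: "symmetric_design P B m k l" and p: "p \<in> P"
  shows "card {b\<in>B. p \<in> b} * (k - 1) = (m - 1) * l"
proof -
  from des have fin: "finite P" "finite B" and "card P = m"
    and blocks: "\<And>b. b \<in> B \<Longrightarrow> b \<subseteq> P \<and> card b = k"
    and pairs: "\<And>q. q \<in> P \<Longrightarrow> q \<noteq> p \<Longrightarrow> card {b\<in>B. p \<in> b \<and> q \<in> b} = l"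
    using p symmetric_design_finite_blocks[OF des] unfolding symmetric_design_def by auto
  have "(m - 1) * l = (\<Sum>q\<in>P - {p}. card {b\<in>B. p \<in> b \<and> q \<in> b})"
    using fin \<open>card P = m\<close> p pairs by simp
  also have "\<dots> = (\<Sum>b\<in>B. card {q\<in>P - {p}. p \<in> b \<and> q \<in> b})"
    using fin by (intro sum_card_Collect_swap) auto
  also have "\<dots> = (\<Sum>b\<in>B. if p \<in> b then k - 1 else 0)"
  proof (rule sum.cong)
    fix b assume "b \<in> B"
    then have "{q\<in>P - {p}. p \<in> b \<and> q \<in> b} = (if p \<in> b then b - {p} else {})"
      "finite b" "card b = k"
      using blocks fin(1) by (auto intro: finite_subset)
    then show "card {q\<in>P - {p}. p \<in> b \<and> q \<in> b} = (if p \<in> b then k - 1 else 0)" by simp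
  qed simp
  also have "\<dots> = card {b\<in>B. p \<in> b} * (k - 1)"
    by (simp add: sum.inter_filter[OF fin(2), symmetric])
  finally show ?thesis by simp
qed

lemma symmetric_design_replication:
  assumes des: "symmetric_design P B m k l" and k: "2 \<le> k" and p: "p \<in> P"
  shows "card {b\<in>B. p \<in> b} = k"
proof -
  from des have fin: "finite P" "finite B" and "card P = m"
    and blocks: "\<And>b. b \<in> B \<Longrightarrow> b \<subseteq> P \<and> card b = k"
    using symmetric_design_finite_blocks[OF des] unfolding symmetric_design_def by auto
  have same: "card {b\<in>B. q \<in> b} = card {b\<in>B. p \<in> b}" if "q \<in> P" for q
  proof -
    have "card {b\<in>B. q \<in> b} * (k - 1) = card {b\<in>B. p \<in> b} * (k - 1)"
      using symmetric_design_replication_mult[OF des] that p by simp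
    then show ?thesis using k by simp
  qed
  have "m * card {b\<in>B. p \<in> b} = (\<Sum>q\<in>P. card {b\<in>B. q \<in> b})"
    using same \<open>card P = m\<close> by simp
  also have "\<dots> = (\<Sum>b\<in>B. card {q\<in>P. q \<in> b})"
    using fin by (rule sum_card_Collect_swap)
  also have "\<dots> = (\<Sum>b\<in>B. k)"
  proof (rule sum.cong)
    fix b assume "b \<in> B"
    then have "{q\<in>P. q \<in> b} = b" "card b = k" using blocks by auto
    then show "card {q\<in>P. q \<in> b} = k" by simp
  qed simp
  also have "\<dots> = m * k"
    using des unfolding symmetric_design_def by simp
  finally have "m * card {b\<in>B. p \<in> b} = m * k" .
  moreover have "m \<noteq> 0"
    using \<open>card P = m\<close> fin p card_0_eq by blast
  ultimately show ?thesis by (metis mult_left_cancel)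
qed

text \<open>The m - 1 numbers |b \<inter> d|, d \<noteq> b, have sum k(k - 1) and sum of squares k(k - 1)l, so by
  k(k - 1) = (m - 1)l they all equal l.\<close>
lemma symmetric_design_block_inter:
  assumes des: "symmetric_design P B m k l" and k: "2 \<le> k"
    and b: "b \<in> B" and c: "c \<in> B" and "b \<noteq> c"
  shows "card (b \<inter> c) = l"
proof -
  from des have fin: "finite P" "finite B" and "card B = m"
    and blocks: "\<And>d. d \<in> B \<Longrightarrow> d \<subseteq> P \<and> card d = k"
    and pairs: "\<And>p q. p \<in> P \<Longrightarrow> q \<in> P \<Longrightarrow> p \<noteq> q \<Longrightarrow> card {d\<in>B. p \<in> d \<and> q \<in> d} = l"
    using symmetric_design_finite_blocks[OF des] unfolding symmetric_design_def by auto
  have "b \<subseteq> P" "card b = k" "finite b"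
    using blocks[OF b] fin(1) by (auto intro: finite_subset)
  then obtain p where "p \<in> b" using k by fastforce
  have "p \<in> P" using \<open>b \<subseteq> P\<close> \<open>p \<in> b\<close> by blast
  have "k * (k - 1) = (m - 1) * l"
    using symmetric_design_replication_mult[OF des \<open>p \<in> P\<close>]
      symmetric_design_replication[OF des k \<open>p \<in> P\<close>] by simp
  moreover have m: "1 \<le> m" using \<open>card B = m\<close> fin(2) b by (auto simp: Suc_le_eq card_gt_0_iff)
  ultimately have lambda_eq: "int k * (int k - 1) = (int m - 1) * int l"
    using k by (metis of_nat_1 of_nat_diff of_nat_mult one_le_numeral order_trans)
  define B' where "B' = B - {b}"
  have "finite B'" "c \<in> B'" and card_B': "int (card B') = int m - 1"
    using fin b c \<open>b \<noteq> c\<close> \<open>card B = m\<close> m by (auto simp: B'_def of_nat_diff)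
  have others: "int (card {d\<in>B'. p \<in> d \<and> q \<in> d}) = (if p = q then int k - 1 else int l - 1)"
    if "p \<in> b" "q \<in> b" for p q
  proof -
    let ?S = "{d\<in>B. p \<in> d \<and> q \<in> d}"
    have "{d\<in>B'. p \<in> d \<and> q \<in> d} = ?S - {b}" "b \<in> ?S" "finite ?S"
      using b that fin(2) by (auto simp: B'_def)
    moreover have "0 < card ?S"
      using \<open>b \<in> ?S\<close> \<open>finite ?S\<close> card_gt_0_iff by blast
    ultimately have "int (card {d\<in>B'. p \<in> d \<and> q \<in> d}) = int (card ?S) - 1"
      by (simp add: of_nat_diff)
    moreover have "card ?S = (if p = q then k else l)"
      using symmetric_design_replication[OF des k] pairs \<open>b \<subseteq> P\<close> that by auto
    ultimately show ?thesis by auto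
  qed
  have first: "(\<Sum>d\<in>B'. int (card (b \<inter> d))) = int k * (int k - 1)"
  proof -
    have "(\<Sum>d\<in>B'. card (b \<inter> d)) = (\<Sum>p\<in>b. card {d\<in>B'. p \<in> d})"
      unfolding Int_def using \<open>finite B'\<close> \<open>finite b\<close> by (intro sum_card_Collect_swap)
    then have "(\<Sum>d\<in>B'. int (card (b \<inter> d))) = (\<Sum>p\<in>b. int (card {d\<in>B'. p \<in> d}))"
      by (metis of_nat_sum)
    also have "\<dots> = (\<Sum>p\<in>b. int k - 1)"
      using others[of p p for p] by (intro sum.cong) simp_all
    finally show ?thesis using \<open>card b = k\<close> by simp
  qed
  have second: "(\<Sum>d\<in>B'. int (card (b \<inter> d)) ^ 2) = int k * (int k - 1) * int l"
  proof -
    have "(\<Sum>d\<in>B'. int (card (b \<inter> d)) ^ 2) = int (\<Sum>d\<in>B'. card (b \<inter> d) ^ 2)"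
      by simp
    also have "\<dots> = int (\<Sum>p\<in>b. \<Sum>q\<in>b. card {d\<in>B'. p \<in> d \<and> q \<in> d})"
      unfolding Int_def using \<open>finite B'\<close> \<open>finite b\<close> by (simp only: sum_card_Collect_power2)
    also have "\<dots> = (\<Sum>p\<in>b. \<Sum>q\<in>b. int (card {d\<in>B'. p \<in> d \<and> q \<in> d}))"
      by simp
    also have "\<dots> = (\<Sum>p\<in>b. \<Sum>q\<in>b. if p = q then int k - 1 else int l - 1)"
      using others by (intro sum.cong) simp_all
    finally have "(\<Sum>d\<in>B'. int (card (b \<inter> d)) ^ 2)
        = (\<Sum>p\<in>b. \<Sum>q\<in>b. if p = q then int k - 1 else int l - 1)" .
    then show ?thesis
      using \<open>finite b\<close> \<open>card b = k\<close> by (simp add: sum_sum_if_eq algebra_simps)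
  qed
  have "int (card (b \<inter> c)) = int l"
    using \<open>finite B'\<close> \<open>c \<in> B'\<close>
  proof (rule eq_if_sum_power2_deviation_eq_0)
    show "(\<Sum>d\<in>B'. int (card (b \<inter> d)) ^ 2) - 2 * int l * (\<Sum>d\<in>B'. int (card (b \<inter> d)))
        + int (card B') * int l ^ 2 = 0"
      unfolding first second card_B' using arg_cong[where f = "\<lambda>x. int l * x", OF lambda_eq]
      by (simp add: power2_eq_square algebra_simps)
  qed
  then show ?thesis by simp
qed

section \<open>Regular graphs with a uniform partition\<close>

lemma common_nbrs_commute: "common_nbrs V E x y = common_nbrs V E y x"
  unfolding common_nbrs_def by (simp add: conj_commute)

locale uniform_partition =
  fixes V :: "'a set" and classes :: "'a set set" and n :: nat
  assumes finite_V: "finite V"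
    and Union_classes: "\<Union>classes = V"
    and classes_disjoint: "\<And>C D. C \<in> classes \<Longrightarrow> D \<in> classes \<Longrightarrow> C \<noteq> D \<Longrightarrow> C \<inter> D = {}"
    and card_class: "\<And>C. C \<in> classes \<Longrightarrow> card C = n"
begin

lemma class_subset: "C \<in> classes \<Longrightarrow> C \<subseteq> V"
  using Union_classes by blast

lemma finite_class: "C \<in> classes \<Longrightarrow> finite C"
  using class_subset finite_V finite_subset by blast

lemma finite_classes: "finite classes"
  using class_subset finite_V by (auto intro: finite_subset[of classes "Pow V"])

definition class_of :: "'a \<Rightarrow> 'a set" where
  "class_of x = (THE C. C \<in> classes \<and> x \<in> C)"

lemma class_of_eq: "C \<in> classes \<Longrightarrow> x \<in> C \<Longrightarrow> class_of x = C"
  unfolding class_of_def using classes_disjoint by (intro the_equality) auto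

lemma class_of_in_classes: "x \<in> V \<Longrightarrow> class_of x \<in> classes"
  and mem_class_of: "x \<in> V \<Longrightarrow> x \<in> class_of x"
  using class_of_eq Union_classes by auto

lemma card_Union_classes: "S \<subseteq> classes \<Longrightarrow> card (\<Union>S) = n * card S"
proof -
  assume S: "S \<subseteq> classes"
  moreover have "pairwise disjnt S"
    using S classes_disjoint unfolding pairwise_def disjnt_def by blast
  ultimately have "card (\<Union>S) = sum card S"
    using finite_class by (intro card_Union_disjoint) auto
  also have "\<dots> = n * card S"
    using S card_class by (simp add: subset_iff)
  finally show ?thesis .
qed

lemma card_V: "card V = n * card classes"
  using card_Union_classes[of classes] Union_classes by simp

lemma card_Collect_eq_sum_classes: "card {z\<in>V. Q z} = (\<Sum>C\<in>classes. card {z\<in>C. Q z})"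
proof -
  have "{z\<in>V. Q z} = (\<Union>C\<in>classes. {z\<in>C. Q z})"
    using Union_classes by auto
  then have "card {z\<in>V. Q z} = card (\<Union>C\<in>classes. {z\<in>C. Q z})" by simp
  also have "\<dots> = (\<Sum>C\<in>classes. card {z\<in>C. Q z})"
    using finite_class classes_disjoint by (intro card_UN_disjoint finite_classes) auto
  finally show ?thesis .
qed

text \<open>The hypothesis on c says that the sum of the squares (|N(y) \<inter> C| - c)^2 over all vertices y
  and classes C, expanded through its first two moments, vanishes.\<close>
lemma card_nbrs_in_class_eq:
  assumes reg: "regular_graph V E K"
    and l1: "\<And>C x y. C \<in> classes \<Longrightarrow> x \<in> C \<Longrightarrow> y \<in> C \<Longrightarrow> x \<noteq> y \<Longrightarrow> common_nbrs V E x y = l1"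
    and eq: "int K + (int n - 1) * int l1 - 2 * c * int K + int (card classes) * c ^ 2 = 0"
    and x: "x \<in> V" and D: "D \<in> classes"
  shows "int (card {z\<in>D. E x z}) = c"
proof -
  from reg have sym: "E y z = E z y" and deg: "y \<in> V \<Longrightarrow> card {z\<in>V. E y z} = K" for y z
    unfolding regular_graph_def simple_graph_def by auto
  define f where "f = (\<lambda>(y, C). int (card {z\<in>C. E y z}))"
  define m where "m = card classes"
  have first: "(\<Sum>yC\<in>V \<times> classes. f yC) = int (card V) * int K"
  proof -
    have "(\<Sum>C\<in>classes. f (y, C)) = int K" if "y \<in> V" for y
      using deg[OF that] card_Collect_eq_sum_classes[of "E y"] by (simp add: f_def flip: of_nat_sum)
    then have "(\<Sum>y\<in>V. \<Sum>C\<in>classes. f (y, C)) = int (card V) * int K"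
      by simp
    then show ?thesis by (simp add: sum.cartesian_product)
  qed
  have common: "card {y\<in>V. E y p \<and> E y q} = (if p = q then K else l1)"
    if "C \<in> classes" "p \<in> C" "q \<in> C" for C p q
  proof -
    have "{y\<in>V. E y p \<and> E y q} = {y\<in>V. E p y \<and> E q y}"
      using sym by blast
    then show ?thesis
      using deg l1[OF that] class_subset[OF that(1)] that(2,3)
      by (auto simp: common_nbrs_def)
  qed
  have "(\<Sum>y\<in>V. f (y, C) ^ 2) = int n * (int K + (int n - 1) * int l1)" if C: "C \<in> classes" for C
  proof -
    have "(\<Sum>y\<in>V. f (y, C) ^ 2) = int (\<Sum>y\<in>V. card {z\<in>C. E y z} ^ 2)"
      by (simp add: f_def)
    also have "\<dots> = int (\<Sum>p\<in>C. \<Sum>q\<in>C. card {y\<in>V. E y p \<and> E y q})"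
      using finite_V finite_class[OF C] by (simp only: sum_card_Collect_power2)
    also have "\<dots> = (\<Sum>p\<in>C. \<Sum>q\<in>C. int (card {y\<in>V. E y p \<and> E y q}))"
      by simp
    also have "\<dots> = (\<Sum>p\<in>C. \<Sum>q\<in>C. if p = q then int K else int l1)"
      using common[OF C] by (intro sum.cong) simp_all
    finally show ?thesis
      using finite_class[OF C] card_class[OF C] by (simp add: sum_sum_if_eq)
  qed
  then have "(\<Sum>C\<in>classes. \<Sum>y\<in>V. f (y, C) ^ 2) = int m * int n * (int K + (int n - 1) * int l1)"
    by (simp add: m_def)
  then have "(\<Sum>y\<in>V. \<Sum>C\<in>classes. f (y, C) ^ 2) = int m * int n * (int K + (int n - 1) * int l1)"
    by (subst sum.swap)
  then have second: "(\<Sum>yC\<in>V \<times> classes. f yC ^ 2) = int m * int n * (int K + (int n - 1) * int l1)"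
    by (simp add: sum.cartesian_product)
  have "f (x, D) = c"
  proof (rule eq_if_sum_power2_deviation_eq_0[where f = f and I = "V \<times> classes"])
    show "finite (V \<times> classes)" "(x, D) \<in> V \<times> classes"
      using finite_V finite_classes x D by auto
    have "int (card (V \<times> classes)) = int m * int n * int m" and "int (card V) = int n * int m"
      using card_V by (simp_all add: card_cartesian_product m_def)
    then show "(\<Sum>yC\<in>V \<times> classes. f yC ^ 2) - 2 * c * (\<Sum>yC\<in>V \<times> classes. f yC)
        + int (card (V \<times> classes)) * c ^ 2 = 0"
      unfolding first second using arg_cong[where f = "\<lambda>t. int m * int n * t", OF eq]
      by (simp add: m_def algebra_simps)
  qed
  then show ?thesis by (simp add: f_def)
qed

end

section \<open>The graph \<Gamma>\<close>

locale gamma_construction = uniform_partition V classes n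
  for V :: "'a set" and classes :: "'a set set" and n :: nat +
  fixes E :: "'a \<Rightarrow> 'a \<Rightarrow> bool" and P :: "'a set" and B :: "'a set set"
    and t :: nat and \<phi> :: "'a set \<Rightarrow> 'a set"
  assumes graph: "simple_graph V E"
    and finite_P: "finite P"
    and block_subset: "\<And>b. b \<in> B \<Longrightarrow> b \<subseteq> P"
    and card_block: "\<And>b. b \<in> B \<Longrightarrow> card b = t"
    and points_disjoint: "P \<inter> V = {}"
    and bij: "bij_betw \<phi> classes B"
begin

abbreviation adj :: "'a \<Rightarrow> 'a \<Rightarrow> bool" where
  "adj \<equiv> gamma_adj V E classes P \<phi>"

lemma phi_subset: "C \<in> classes \<Longrightarrow> \<phi> C \<subseteq> P"
  by (rule block_subset[OF bij_betw_apply[OF bij]])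

lemma card_phi: "C \<in> classes \<Longrightarrow> card (\<phi> C) = t"
  by (rule card_block[OF bij_betw_apply[OF bij]])

lemma card_classes_phi: "card {C\<in>classes. Q (\<phi> C)} = card {b\<in>B. Q b}"
  by (rule bij_betw_same_card, rule bij_betw_Collect[OF bij]) simp

lemma adj_vertex_vertex: "x \<in> V \<Longrightarrow> z \<in> V \<Longrightarrow> adj x z \<longleftrightarrow> E x z"
  using points_disjoint by (auto simp: gamma_adj_def)

lemma adj_vertex_point:
  assumes "x \<in> V" "y \<in> P"
  shows "adj x y \<longleftrightarrow> y \<in> \<phi> (class_of x)"
proof -
  have "adj x y \<longleftrightarrow> (\<exists>C\<in>classes. x \<in> C \<and> y \<in> \<phi> C)"
    using assms points_disjoint class_subset by (auto simp: gamma_adj_def)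
  also have "\<dots> \<longleftrightarrow> y \<in> \<phi> (class_of x)"
    using assms(1) class_of_eq class_of_in_classes mem_class_of by blast
  finally show ?thesis .
qed

lemma not_adj_points: "x \<in> P \<Longrightarrow> y \<in> P \<Longrightarrow> \<not> adj x y"
  using points_disjoint class_subset by (auto simp: gamma_adj_def)

lemma adj_commute: "adj x y \<longleftrightarrow> adj y x"
proof -
  have "E x y \<longleftrightarrow> E y x" for x y
    using graph unfolding simple_graph_def by blast
  then show ?thesis unfolding gamma_adj_def by blast
qed

lemma gamma_simple_graph: "simple_graph (V \<union> P) adj"
proof -
  have "x \<in> V \<union> P \<and> y \<in> V \<union> P" if "adj x y" for x y
    using that graph class_subset phi_subset unfolding gamma_adj_def simple_graph_def by blast
  moreover have "\<not> adj x x" for x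
    using graph class_subset points_disjoint unfolding gamma_adj_def simple_graph_def by blast
  ultimately show ?thesis
    using finite_V finite_P adj_commute unfolding simple_graph_def by blast
qed

lemma nbrs_vertex:
  assumes "x \<in> V"
  shows "{z\<in>V \<union> P. adj x z} = {z\<in>V. E x z} \<union> \<phi> (class_of x)"
proof -
  have "{z\<in>V \<union> P. adj x z} = {z\<in>V. adj x z} \<union> {z\<in>P. adj x z}"
    by blast
  also have "{z\<in>V. adj x z} = {z\<in>V. E x z}"
    using adj_vertex_vertex assms by blast
  also have "{z\<in>P. adj x z} = \<phi> (class_of x)"
    using adj_vertex_point assms phi_subset class_of_in_classes by blast
  finally show ?thesis .
qed

lemma nbrs_point:
  assumes "y \<in> P"
  shows "{z\<in>V \<union> P. adj y z} = \<Union>{C\<in>classes. y \<in> \<phi> C}"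
proof -
  have "{z\<in>V \<union> P. adj y z} = {z\<in>V. adj y z} \<union> {z\<in>P. adj y z}"
    by blast
  also have "{z\<in>P. adj y z} = {}"
    using not_adj_points assms by blast
  also have "{z\<in>V. adj y z} = {z\<in>V. y \<in> \<phi> (class_of z)}"
    using adj_vertex_point[OF _ assms] adj_commute[of y] by auto
  also have "\<dots> = \<Union>{C\<in>classes. y \<in> \<phi> C}"
  proof (intro equalityI subsetI)
    fix z assume "z \<in> {z\<in>V. y \<in> \<phi> (class_of z)}"
    then show "z \<in> \<Union>{C\<in>classes. y \<in> \<phi> C}"
      using class_of_in_classes mem_class_of by blast
  next
    fix z assume "z \<in> \<Union>{C\<in>classes. y \<in> \<phi> C}"
    then obtain C where "C \<in> classes" "z \<in> C" "y \<in> \<phi> C" by blast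
    then show "z \<in> {z\<in>V. y \<in> \<phi> (class_of z)}"
      using class_subset class_of_eq by auto
  qed
  finally show ?thesis by simp
qed

lemma common_nbrs_vertices:
  assumes "x \<in> V" "y \<in> V"
  shows "common_nbrs (V \<union> P) adj x y = common_nbrs V E x y + card (\<phi> (class_of x) \<inter> \<phi> (class_of y))"
proof -
  have phi_in_P: "\<phi> (class_of x) \<subseteq> P" "\<phi> (class_of y) \<subseteq> P"
    using phi_subset class_of_in_classes assms by auto
  have "{z\<in>V \<union> P. adj x z \<and> adj y z} = {z\<in>V \<union> P. adj x z} \<inter> {z\<in>V \<union> P. adj y z}"
    by blast
  also have "\<dots> = ({z\<in>V. E x z} \<union> \<phi> (class_of x)) \<inter> ({z\<in>V. E y z} \<union> \<phi> (class_of y))"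
    by (simp only: nbrs_vertex assms)
  also have "\<dots> = {z\<in>V. E x z \<and> E y z} \<union> (\<phi> (class_of x) \<inter> \<phi> (class_of y))"
    using phi_in_P points_disjoint by blast
  finally have "common_nbrs (V \<union> P) adj x y = card ({z\<in>V. E x z \<and> E y z} \<union> (\<phi> (class_of x) \<inter> \<phi> (class_of y)))"
    unfolding common_nbrs_def by (rule arg_cong[where f = card])
  also have "\<dots> = common_nbrs V E x y + card (\<phi> (class_of x) \<inter> \<phi> (class_of y))"
    unfolding common_nbrs_def
  proof (rule card_Un_disjoint)
    show "finite {z\<in>V. E x z \<and> E y z}" using finite_V by simp
    show "finite (\<phi> (class_of x) \<inter> \<phi> (class_of y))"
      using phi_in_P finite_P by (meson finite_Int finite_subset)
    show "{z\<in>V. E x z \<and> E y z} \<inter> (\<phi> (class_of x) \<inter> \<phi> (class_of y)) = {}"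
      using phi_in_P points_disjoint by blast
  qed
  finally show ?thesis .
qed

lemma common_nbrs_vertex_point:
  assumes "x \<in> V" "y \<in> P"
  shows "common_nbrs (V \<union> P) adj x y = (\<Sum>D\<in>{D\<in>classes. y \<in> \<phi> D}. card {z\<in>D. E x z})"
proof -
  have "{z\<in>V \<union> P. adj x z \<and> adj y z} = {z\<in>V \<union> P. adj x z} \<inter> {z\<in>V \<union> P. adj y z}"
    by blast
  also have "\<dots> = ({z\<in>V. E x z} \<union> \<phi> (class_of x)) \<inter> \<Union>{D\<in>classes. y \<in> \<phi> D}"
    unfolding nbrs_vertex[OF assms(1)] nbrs_point[OF assms(2)] ..
  also have "\<dots> = (\<Union>D\<in>{D\<in>classes. y \<in> \<phi> D}. {z\<in>D. E x z})"
  proof -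
    have "\<phi> (class_of x) \<inter> V = {}"
      using phi_subset class_of_in_classes assms(1) points_disjoint by blast
    moreover have "\<Union>{D\<in>classes. y \<in> \<phi> D} \<subseteq> V"
      using class_subset by blast
    ultimately show ?thesis by blast
  qed
  finally have "common_nbrs (V \<union> P) adj x y = card (\<Union>D\<in>{D\<in>classes. y \<in> \<phi> D}. {z\<in>D. E x z})"
    unfolding common_nbrs_def by (rule arg_cong[where f = card])
  also have "\<dots> = (\<Sum>D\<in>{D\<in>classes. y \<in> \<phi> D}. card {z\<in>D. E x z})"
    using finite_classes finite_class classes_disjoint by (intro card_UN_disjoint) auto
  finally show ?thesis .
qed

lemma common_nbrs_points:
  assumes "x \<in> P" "y \<in> P"
  shows "common_nbrs (V \<union> P) adj x y = n * card {b\<in>B. x \<in> b \<and> y \<in> b}"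
proof -
  have "{z\<in>V \<union> P. adj x z \<and> adj y z} = {z\<in>V \<union> P. adj x z} \<inter> {z\<in>V \<union> P. adj y z}"
    by blast
  also have "\<dots> = \<Union>{C\<in>classes. x \<in> \<phi> C} \<inter> \<Union>{C\<in>classes. y \<in> \<phi> C}"
    unfolding nbrs_point[OF assms(1)] nbrs_point[OF assms(2)] ..
  also have "\<dots> = \<Union>{C\<in>classes. x \<in> \<phi> C \<and> y \<in> \<phi> C}"
    using classes_disjoint by blast
  finally have "common_nbrs (V \<union> P) adj x y = card (\<Union>{C\<in>classes. x \<in> \<phi> C \<and> y \<in> \<phi> C})"
    unfolding common_nbrs_def by (rule arg_cong[where f = card])
  also have "\<dots> = n * card {b\<in>B. x \<in> b \<and> y \<in> b}"
    using card_Union_classes card_classes_phi[of "\<lambda>b. x \<in> b \<and> y \<in> b"] by simp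
  finally show ?thesis .
qed

lemma card_nbrs_vertex:
  assumes "x \<in> V"
  shows "card {z\<in>V \<union> P. adj x z} = card {z\<in>V. E x z} + t"
proof -
  have "\<phi> (class_of x) \<subseteq> P"
    using phi_subset class_of_in_classes assms by blast
  then have "card ({z\<in>V. E x z} \<union> \<phi> (class_of x)) = card {z\<in>V. E x z} + card (\<phi> (class_of x))"
    using finite_V finite_P points_disjoint by (intro card_Un_disjoint) (auto intro: finite_subset)
  then show ?thesis
    using nbrs_vertex[OF assms] card_phi class_of_in_classes[OF assms] by simp
qed

lemma card_nbrs_point:
  assumes "y \<in> P"
  shows "card {z\<in>V \<union> P. adj y z} = n * card {b\<in>B. y \<in> b}"
  using nbrs_point[OF assms] card_Union_classes card_classes_phi[of "\<lambda>b. y \<in> b"] by simp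

lemma strongly_regular_gamma:
  assumes deg: "\<And>x. x \<in> V \<Longrightarrow> card {z\<in>V. E x z} = K"
    and same_class: "\<And>C x y. C \<in> classes \<Longrightarrow> x \<in> C \<Longrightarrow> y \<in> C \<Longrightarrow> x \<noteq> y \<Longrightarrow> common_nbrs V E x y = l1"
    and other_class: "\<And>C D x y. C \<in> classes \<Longrightarrow> D \<in> classes \<Longrightarrow> C \<noteq> D \<Longrightarrow> x \<in> C \<Longrightarrow> y \<in> D
      \<Longrightarrow> common_nbrs V E x y = l2"
    and per_class: "\<And>x C. x \<in> V \<Longrightarrow> C \<in> classes \<Longrightarrow> card {z\<in>C. E x z} = c"
    and replication: "\<And>p. p \<in> P \<Longrightarrow> card {b\<in>B. p \<in> b} = t"
    and point_pairs: "\<And>p q. p \<in> P \<Longrightarrow> q \<in> P \<Longrightarrow> p \<noteq> q \<Longrightarrow> card {b\<in>B. p \<in> b \<and> q \<in> b} = l"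
    and block_inter: "\<And>b b'. b \<in> B \<Longrightarrow> b' \<in> B \<Longrightarrow> b \<noteq> b' \<Longrightarrow> card (b \<inter> b') = l"
    and "K + t = t * n" and "l1 + t = \<mu>" and "l2 + l = \<mu>" and "t * c = \<mu>" and "n * l = \<mu>"
  shows "strongly_regular (V \<union> P) adj (card V + card P) (t * n) \<mu> \<mu>"
proof -
  have degree: "card {z\<in>V \<union> P. adj x z} = t * n" if "x \<in> V \<union> P" for x
    using that card_nbrs_vertex card_nbrs_point deg replication \<open>K + t = t * n\<close> by auto
  have vertices: "common_nbrs (V \<union> P) adj x y = \<mu>" if "x \<in> V" "y \<in> V" "x \<noteq> y" for x y
  proof (cases "class_of x = class_of y")
    case True
    then show ?thesis
      using common_nbrs_vertices[OF that(1,2)] same_class[of "class_of x" x y] that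
        class_of_in_classes mem_class_of card_phi \<open>l1 + t = \<mu>\<close> by auto
  next
    case False
    then have "\<phi> (class_of x) \<noteq> \<phi> (class_of y)"
      using bij class_of_in_classes that(1,2) unfolding bij_betw_def inj_on_def by blast
    then show ?thesis
      using common_nbrs_vertices[OF that(1,2)] other_class[OF _ _ False] block_inter
        bij_betw_apply[OF bij] class_of_in_classes mem_class_of that \<open>l2 + l = \<mu>\<close> by auto
  qed
  have vertex_point: "common_nbrs (V \<union> P) adj x y = \<mu>" if "x \<in> V" "y \<in> P" for x y
  proof -
    have "common_nbrs (V \<union> P) adj x y = card {D\<in>classes. y \<in> \<phi> D} * c"
      using common_nbrs_vertex_point[OF that] per_class[OF that(1)] by simp
    then show ?thesis
      using card_classes_phi[of "\<lambda>b. y \<in> b"] replication[OF that(2)] \<open>t * c = \<mu>\<close> by simp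
  qed
  have common: "common_nbrs (V \<union> P) adj x y = \<mu>" if "x \<in> V \<union> P" "y \<in> V \<union> P" "x \<noteq> y" for x y
    using that vertices vertex_point common_nbrs_commute[of "V \<union> P" adj x y]
      common_nbrs_points point_pairs \<open>n * l = \<mu>\<close> by auto
  have "card (V \<union> P) = card V + card P"
    using finite_V finite_P points_disjoint by (simp add: card_Un_disjoint Int_commute)
  moreover have "\<not> adj x x" for x
    using gamma_simple_graph unfolding simple_graph_def by blast
  ultimately show ?thesis
    unfolding strongly_regular_def regular_graph_def
    using gamma_simple_graph degree common by metis
qed

end

lemma dd_graph_symmetric_design_strongly_regular:
  assumes ddg: "dd_graph V E v K l1 l2 m n classes"
    and design: "symmetric_design P B m t l" and "2 \<le> t"
    and disj: "P \<inter> V = {}" and phi: "bij_betw \<phi> classes B"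
    and per_class: "int K + (int n - 1) * int l1 - 2 * int c * int K + int m * int c ^ 2 = 0"
    and "K + t = t * n" and "l1 + t = \<mu>" and "l2 + l = \<mu>" and "t * c = \<mu>" and "n * l = \<mu>"
  shows "strongly_regular (V \<union> P) (gamma_adj V E classes P \<phi>) (m * (n + 1)) (t * n) \<mu> \<mu>"
proof -
  from ddg have reg: "regular_graph V E K" and "card classes = m"
    and L1: "\<forall>C\<in>classes. \<forall>x\<in>C. \<forall>y\<in>C. x \<noteq> y \<longrightarrow> common_nbrs V E x y = l1"
    and L2: "\<forall>C\<in>classes. \<forall>D\<in>classes. C \<noteq> D \<longrightarrow> (\<forall>x\<in>C. \<forall>y\<in>D. common_nbrs V E x y = l2)"
    unfolding dd_graph_def by auto
  then have "finite V"
    unfolding regular_graph_def simple_graph_def by blast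
  interpret gamma_construction V classes n E P B t \<phi>
    using ddg design disj phi \<open>finite V\<close> unfolding dd_graph_def regular_graph_def symmetric_design_def
    by unfold_locales auto
  have deg: "\<And>x. x \<in> V \<Longrightarrow> card {z\<in>V. E x z} = K"
    using reg unfolding regular_graph_def by blast
  have same_class: "\<And>C x y. C \<in> classes \<Longrightarrow> x \<in> C \<Longrightarrow> y \<in> C \<Longrightarrow> x \<noteq> y \<Longrightarrow> common_nbrs V E x y = l1"
    using L1 by simp
  have other_class: "\<And>C D x y. C \<in> classes \<Longrightarrow> D \<in> classes \<Longrightarrow> C \<noteq> D \<Longrightarrow> x \<in> C \<Longrightarrow> y \<in> D
      \<Longrightarrow> common_nbrs V E x y = l2"
    using L2 by simp
  have in_class: "card {z\<in>C. E x z} = c" if "x \<in> V" "C \<in> classes" for x C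
  proof -
    have "int (card {z\<in>C. E x z}) = int c"
      by (rule card_nbrs_in_class_eq[OF reg same_class per_class[folded \<open>card classes = m\<close>] that])
    then show ?thesis by (simp only: of_nat_eq_iff)
  qed
  have pairs: "\<And>p q. p \<in> P \<Longrightarrow> q \<in> P \<Longrightarrow> p \<noteq> q \<Longrightarrow> card {b\<in>B. p \<in> b \<and> q \<in> b} = l"
    using design unfolding symmetric_design_def by blast
  note replication = symmetric_design_replication[OF design \<open>2 \<le> t\<close>]
    and block_inter = symmetric_design_block_inter[OF design \<open>2 \<le> t\<close>]
  have "strongly_regular (V \<union> P) adj (card V + card P) (t * n) \<mu> \<mu>"
    by (rule strongly_regular_gamma)
      (fact deg same_class other_class in_class replication pairs block_inter assms(7-11))+
  moreover have "card V + card P = m * (n + 1)"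
    using card_V \<open>card classes = m\<close> design unfolding symmetric_design_def by simp
  ultimately show ?thesis by simp
qed

lemma parameter_identities:
  fixes n t m v K l1 l2 l :: nat and s :: int
  assumes s: "s = - int t" and "s < 0" and "int n + s > 0"
    and m: "int m * (int n + s) = (- s) * (int n - 1)"
    and K: "int K = (- s) * (int n - 1)"
    and l1: "int l1 = (- s) * (int n + s - 1)"
    and l2: "int l2 * int n = (- s) * (int n - 1) * (int n + s)"
    and l: "int l * int n = (- s) * (int n + s)"
  shows "2 \<le> t" and "K + t = t * n" and "l1 + t = t * (n - t)"
    and "l2 + l = t * (n - t)" and "n * l = t * (n - t)"
    and "int K + (int n - 1) * int l1 - 2 * int (n - t) * int K + int m * int (n - t) ^ 2 = 0"
    and "nat ((- s) * int n) = t * n" and "nat ((- s) * (int n + s)) = t * (n - t)"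
proof -
  have "1 \<le> t" "t < n" and nt: "int (n - t) = int n - int t"
    using assms(2,3) s by auto
  show "2 \<le> t"
  proof (rule ccontr)
    assume "\<not> 2 \<le> t"
    then have "t = 1" using \<open>1 \<le> t\<close> by simp
    then have ln: "int l * int n = int n - 1" using l s by simp
    show False
    proof (cases "l = 0")
      case True
      then show False using ln \<open>t = 1\<close> \<open>t < n\<close> by simp
    next
      case False
      then have "int n \<le> int l * int n" using mult_right_mono[of 1 "int l" "int n"] by simp
      then show False using ln by simp
    qed
  qed
  have mt: "int m * (int n - int t) = int t * (int n - 1)"
    using m s by (simp add: algebra_simps)
  have "int (K + t) = int (t * n)" using K s by (simp add: algebra_simps)
  then show "K + t = t * n" by (simp only: of_nat_eq_iff)
  have "int (l1 + t) = int (t * (n - t))" using l1 s nt by (simp add: algebra_simps)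
  then show "l1 + t = t * (n - t)" by (simp only: of_nat_eq_iff)
  have "int (n * l) = int (t * (n - t))" using l s nt by (simp add: algebra_simps)
  then show "n * l = t * (n - t)" by (simp only: of_nat_eq_iff)
  have "int (l2 + l) * int n = int (t * (n - t)) * int n"
    using l2 l s nt by (simp add: algebra_simps)
  then have "int (l2 + l) = int (t * (n - t))" using \<open>t < n\<close> by (simp del: of_nat_mult of_nat_add)
  then show "l2 + l = t * (n - t)" by (simp only: of_nat_eq_iff)
  have mt2: "int m * (int n - int t) ^ 2 = int t * (int n - 1) * (int n - int t)"
    unfolding power2_eq_square mt[symmetric] by (simp add: algebra_simps)
  have Kt: "int K = int t * (int n - 1)" and l1t: "int l1 = int t * (int n - int t - 1)"
    using K l1 s by (simp_all add: algebra_simps)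
  show "int K + (int n - 1) * int l1 - 2 * int (n - t) * int K + int m * int (n - t) ^ 2 = 0"
    unfolding nt mt2 Kt l1t by (simp add: algebra_simps)
  show "nat ((- s) * int n) = t * n" using s by (simp add: nat_mult_distrib)
  have "(- s) * (int n + s) = int (t * (n - t))" using s nt by simp
  then show "nat ((- s) * (int n + s)) = t * (n - t)" by (simp only: nat_int)
qed

theorem theorem4p3:
  fixes n :: nat and s :: int and m v K l1 l2 l :: nat
    and V P :: "'a set" and E :: "'a \<Rightarrow> 'a \<Rightarrow> bool"
    and classes B :: "'a set set" and \<phi> :: "'a set \<Rightarrow> 'a set"
  assumes s_neg: "s < 0" and ns_pos: "int n + s > 0"
    and m_def: "int m * (int n + s) = (- s) * (int n - 1)"
    and v_def: "int v * (int n + s) = int n * (- s) * (int n - 1)"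
    and K_def: "int K = (- s) * (int n - 1)"
    and l1_def: "int l1 = (- s) * (int n + s - 1)"
    and l2_def: "int l2 * int n = (- s) * (int n - 1) * (int n + s)"
    and l_def: "int l * int n = (- s) * (int n + s)"
    and ddg: "dd_graph V E v K l1 l2 m n classes"
    and des: "symmetric_design P B m (nat (- s)) l"
    and disj: "P \<inter> V = {}"
    and phi: "bij_betw \<phi> classes B"
  shows "strongly_regular (V \<union> P) (gamma_adj V E classes P \<phi>)
           (m * (n + 1)) (nat ((- s) * int n)) (nat ((- s) * (int n + s))) (nat ((- s) * (int n + s)))"
proof -
  define t where "t = nat (- s)"
  have "s = - int t" using s_neg by (simp add: t_def)
  note params = parameter_identities[OF this s_neg ns_pos m_def K_def l1_def l2_def l_def]
  have "symmetric_design P B m t l"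
    using des by (simp add: t_def)
  have "strongly_regular (V \<union> P) (gamma_adj V E classes P \<phi>) (m * (n + 1)) (t * n) (t * (n - t)) (t * (n - t))"
    by (rule dd_graph_symmetric_design_strongly_regular[where c = "n - t"])
      (fact ddg \<open>symmetric_design P B m t l\<close> disj phi params(1-6) refl)+
  then show ?thesis using params(7,8) by simp
qed

end
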